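(* Let $K$ be a field of characteristic zero, $R=K[x,y,z]$ with the standard grading, and let $a,b,c,\beta,\gamma$ be integers with $a\geq c\geq 2$, $1\leq \beta\leq b-1$ and $\max\{1,b-a+1\}\leq \gamma\leq \min\{b-1,c-1\}$. Consider the ideal $$I=(x^a,\ y^b-x^{b-\gamma}z^\gamma,\ z^c,\ x^{a-b+\gamma}y^{b-\beta},\ y^{b-\beta}z^{c-\gamma})\subset R.$$ Then $R/I$ has the weak Lefschetz property if one of the following conditions holds: (a) $a\geq 2b+c-6$; (b) $a\geq b+c-2$ and $1\leq \beta\leq a-b-c+5$.
   Context: A graded Artinian $K$-algebra $A=\bigoplus_i [A]_i$ has the weak Lefschetz property (WLP) if there exists a linear form $L\in[A]_1$ such that the multiplication map $\times L:[A]_i\to[A]_{i+1}$ has maximal rank (i.e. is injective or surjective) for every $i$. *)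

theory Defs
  imports Main "HOL-Library.Poly_Mapping" "HOL-Library.Product_Plus"
begin

text \<open>The polynomial ring R = K[x,y,z]: finitely supported maps from exponent
  triples (i,j,k) (standing for x^i y^j z^k) to coefficients in K.\<close>

type_synonym 'a poly3 = "(nat \<times> nat \<times> nat) \<Rightarrow>\<^sub>0 'a"

definition varX :: "'a::comm_ring_1 poly3" where "varX = Poly_Mapping.single (1,0,0) 1"
definition varY :: "'a::comm_ring_1 poly3" where "varY = Poly_Mapping.single (0,1,0) 1"
definition varZ :: "'a::comm_ring_1 poly3" where "varZ = Poly_Mapping.single (0,0,1) 1"

fun mdeg :: "nat \<times> nat \<times> nat \<Rightarrow> nat" where
  "mdeg (i,j,k) = i + j + k"

text \<open>f lies in the graded piece [R]_d (0 lies in every graded piece).\<close>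
definition homog :: "nat \<Rightarrow> 'a::comm_ring_1 poly3 \<Rightarrow> bool" where
  "homog d f \<longleftrightarrow> (\<forall>m\<in>Poly_Mapping.keys f. mdeg m = d)"

definition gen_ideal :: "'a::comm_ring_1 poly3 list \<Rightarrow> 'a poly3 set" where
  "gen_ideal gs = {(\<Sum>i<length gs. q i * gs ! i) | q. True}"

definition artinian_quot :: "'a::comm_ring_1 poly3 list \<Rightarrow> bool" where
  "artinian_quot gs \<longleftrightarrow> (\<exists>D. \<forall>d\<ge>D. \<forall>f. homog d f \<longrightarrow> f \<in> gen_ideal gs)"

definition mult_injective :: "'a::comm_ring_1 poly3 list \<Rightarrow> 'a poly3 \<Rightarrow> nat \<Rightarrow> bool" where
  "mult_injective gs L d \<longleftrightarrow>
     (\<forall>f. homog d f \<longrightarrow> L * f \<in> gen_ideal gs \<longrightarrow> f \<in> gen_ideal gs)"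

definition mult_surjective :: "'a::comm_ring_1 poly3 list \<Rightarrow> 'a poly3 \<Rightarrow> nat \<Rightarrow> bool" where
  "mult_surjective gs L d \<longleftrightarrow>
     (\<forall>g. homog (Suc d) g \<longrightarrow> (\<exists>f. homog d f \<and> g - L * f \<in> gen_ideal gs))"

text \<open>Weak Lefschetz property of the graded Artinian algebra R/I, I = (gs),
  gs homogeneous.  A linear form of A is the class of a linear form of R.\<close>
definition has_WLP :: "'a::comm_ring_1 poly3 list \<Rightarrow> bool" where
  "has_WLP gs \<longleftrightarrow> artinian_quot gs \<and>
     (\<exists>L. homog 1 L \<and> (\<forall>d. mult_injective gs L d \<or> mult_surjective gs L d))"

end

theory Submission
  imports Defs
begin

text \<open>
  I is the link J : y^\<beta> of the complete intersection J = (x^a, y^b - x^(b-\<gamma>) z^\<gamma>, z^c).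
  A normal form modulo J shows f \<in> I iff y^\<beta> f \<in> J, and that R/I is Gorenstein: its
  multiplication pairs degree i perfectly with degree s - i, s = a + b + c - 3 - \<beta>.
  By this duality, injectivity of \<times>L in degree d follows from surjectivity in degree s - 1 - d,
  so it suffices that \<times>L is surjective from degree \<lfloor>s/2\<rfloor> on. For L = y - x this is a walk
  along the monomials x^i z^k of the target degree, each step supplied by the binomial generator,
  until a monomial generator kills the monomial; the numerical hypotheses guarantee this except when
  b = 3, \<beta> = 1, a = c. There L = 3y - 2x - z (or 3y - 2z - x) works, because the remaining
  relations form a 2 x 2 system with determinant 9a + 2 - 2(-8)^a, nonzero in characteristic zero.
\<close>

section \<open>Monomials, graded pieces and ideals\<close>

definition mon :: "nat \<times> nat \<times> nat \<Rightarrow> 'a::comm_ring_1 poly3" where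
  "mon m = Poly_Mapping.single m 1"

lemma zero_nat3: "(0::nat \<times> nat \<times> nat) = (0,0,0)"
  by (simp add: zero_prod_def)

lemma mon_0: "(mon (0,0,0) :: 'a::comm_ring_1 poly3) = 1"
  by (simp add: mon_def zero_nat3[symmetric])

lemma mon_mult: "mon m * mon n = (mon (m + n) :: 'a::comm_ring_1 poly3)"
  by (simp add: mon_def mult_single)

lemma mon_power: "(mon (i,j,k) :: 'a::comm_ring_1 poly3) ^ n = mon (n * i, n * j, n * k)"
  by (induction n) (simp_all add: mon_0 mon_mult)

lemma single_eq_const_mult_mon:
  "Poly_Mapping.single m c = Poly_Mapping.single (0,0,0) c * (mon m :: 'a::comm_ring_1 poly3)"
  by (simp add: mon_def mult_single zero_nat3[symmetric])

lemma varX_power: "(varX ^ n :: 'a::comm_ring_1 poly3) = mon (n,0,0)"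
  using mon_power[of 1 0 0 n] by (simp add: varX_def mon_def)

lemma varY_power: "(varY ^ n :: 'a::comm_ring_1 poly3) = mon (0,n,0)"
  using mon_power[of 0 1 0 n] by (simp add: varY_def mon_def)

lemma varZ_power: "(varZ ^ n :: 'a::comm_ring_1 poly3) = mon (0,0,n)"
  using mon_power[of 0 0 1 n] by (simp add: varZ_def mon_def)

lemma poly_mapping_sum_single:
  "f = (\<Sum>m\<in>Poly_Mapping.keys f. Poly_Mapping.single m (Poly_Mapping.lookup f m))"
  by (rule poly_mapping_eqI) (simp add: lookup_sum lookup_single when_def in_keys_iff)

lemma mdeg_add: "mdeg (m + n) = mdeg m + mdeg n"
  by (cases m; cases n) auto

lemma mdeg_Suc_split:
  assumes "mdeg m = Suc n"
  obtains m' v where "m = m' + v" "mdeg m' = n" "mdeg v = 1"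
proof -
  obtain i j k where m: "m = (i,j,k)" by (cases m)
  consider "i > 0" | "i = 0" "j > 0" | "i = 0" "j = 0" by blast
  then show thesis
  proof cases
    case 1 with assms m show thesis by (intro that[of "(i-1,j,k)" "(1,0,0)"]) auto
  next
    case 2 with assms m show thesis by (intro that[of "(i,j-1,k)" "(0,1,0)"]) auto
  next
    case 3 with assms m show thesis by (intro that[of "(i,j,k-1)" "(0,0,1)"]) auto
  qed
qed

lemma homog_0 [simp]: "homog d 0"
  by (simp add: homog_def)

lemma homog_single: "mdeg m = d \<Longrightarrow> homog d (Poly_Mapping.single m c)"
  by (simp add: homog_def)

lemma homog_mon: "mdeg m = d \<Longrightarrow> homog d (mon m)"
  by (simp add: mon_def homog_single)

lemma homog_const: "homog 0 (Poly_Mapping.single (0,0,0) c)"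
  by (simp add: homog_single)

lemma homog_of_int: "homog 0 (of_int n :: 'a::comm_ring_1 poly3)"
  using homog_const[of "of_int n :: 'a"] by (simp add: zero_nat3[symmetric])

lemma homog_add: "homog d f \<Longrightarrow> homog d g \<Longrightarrow> homog d (f + g)"
  using keys_add[of f g] by (auto simp: homog_def)

lemma homog_uminus: "homog d f \<Longrightarrow> homog d (- f)"
  by (simp add: homog_def keys_minus)

lemma homog_diff: "homog d f \<Longrightarrow> homog d g \<Longrightarrow> homog d (f - g)"
  using homog_add[of d f "- g"] homog_uminus[of d g] by simp

lemma homog_mult: "homog d f \<Longrightarrow> homog e g \<Longrightarrow> homog (d + e) (f * g)"
  using keys_mult[of f g] by (fastforce simp: homog_def mdeg_add)

lemma homog_of_int_mult: "homog d f \<Longrightarrow> homog d (of_int n * f)"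
  using homog_mult[OF homog_of_int] by fastforce

lemma homog_power: "homog 1 f \<Longrightarrow> homog n (f ^ n)"
proof (induction n)
  case 0 show ?case using homog_of_int[of 1] by simp
next
  case (Suc n) then show ?case using homog_mult[of 1 f n "f ^ n"] by simp
qed

lemma gen_ideal_memI: "f = (\<Sum>i<length gs. q i * gs ! i) \<Longrightarrow> f \<in> gen_ideal gs"
  unfolding gen_ideal_def by blast

lemma gen_ideal_0: "0 \<in> gen_ideal gs"
  unfolding gen_ideal_def by (auto intro!: exI[of _ "\<lambda>_. 0"])

lemma gen_ideal_add:
  assumes "f \<in> gen_ideal gs" "g \<in> gen_ideal gs"
  shows "f + g \<in> gen_ideal gs"
proof -
  obtain q r where "f = (\<Sum>i<length gs. q i * gs ! i)" "g = (\<Sum>i<length gs. r i * gs ! i)"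
    using assms unfolding gen_ideal_def by blast
  then have "f + g = (\<Sum>i<length gs. (q i + r i) * gs ! i)"
    by (simp add: sum.distrib distrib_right)
  then show ?thesis by (rule gen_ideal_memI)
qed

lemma gen_ideal_mult_left:
  assumes "f \<in> gen_ideal gs"
  shows "r * f \<in> gen_ideal gs"
proof -
  obtain q where "f = (\<Sum>i<length gs. q i * gs ! i)"
    using assms unfolding gen_ideal_def by blast
  then have "r * f = (\<Sum>i<length gs. (r * q i) * gs ! i)"
    by (simp add: sum_distrib_left mult.assoc)
  then show ?thesis by (rule gen_ideal_memI)
qed

lemma gen_ideal_mult_right: "f \<in> gen_ideal gs \<Longrightarrow> f * r \<in> gen_ideal gs"
  using gen_ideal_mult_left[of f gs r] by (simp add: mult.commute)

lemma gen_ideal_uminus: "f \<in> gen_ideal gs \<Longrightarrow> - f \<in> gen_ideal gs"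
  using gen_ideal_mult_left[of f gs "- 1"] by simp

lemma gen_ideal_sum:
  "finite S \<Longrightarrow> (\<And>i. i \<in> S \<Longrightarrow> f i \<in> gen_ideal gs) \<Longrightarrow> sum f S \<in> gen_ideal gs"
  by (induction S rule: finite_induct) (auto intro: gen_ideal_add gen_ideal_0)

lemma gen_ideal_nth: "i < length gs \<Longrightarrow> gs ! i \<in> gen_ideal gs"
  by (rule gen_ideal_memI[where q = "\<lambda>j. if j = i then 1 else 0"])
    (simp add: if_distrib[of "\<lambda>c. c * _"] cong: if_cong)

lemma single_mem_gen_ideal:
  assumes "mon m0 \<in> gen_ideal gs" "m = m1 + m0"
  shows "Poly_Mapping.single m c \<in> gen_ideal (gs :: 'a::comm_ring_1 poly3 list)"
  using gen_ideal_mult_left[OF assms(1), of "Poly_Mapping.single m1 c"] assms(2)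
  by (simp add: mon_def mult_single)

section \<open>Multiplication by a linear form\<close>

definition in_mult_image :: "'a::comm_ring_1 poly3 list \<Rightarrow> 'a poly3 \<Rightarrow> nat \<Rightarrow> 'a poly3 \<Rightarrow> bool" where
  "in_mult_image gs L d g \<longleftrightarrow> (\<exists>f. homog d f \<and> g - L * f \<in> gen_ideal gs)"

lemma mult_surjective_iff:
  "mult_surjective gs L d \<longleftrightarrow> (\<forall>g. homog (Suc d) g \<longrightarrow> in_mult_image gs L d g)"
  by (simp add: mult_surjective_def in_mult_image_def)

lemma in_mult_image_of_mem: "g \<in> gen_ideal gs \<Longrightarrow> in_mult_image gs L d g"
  unfolding in_mult_image_def by (rule exI[of _ 0]) simp

lemma in_mult_image_0: "in_mult_image gs L d 0"
  by (rule in_mult_image_of_mem, rule gen_ideal_0)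

lemma in_mult_image_L_mult: "homog d f \<Longrightarrow> in_mult_image gs L d (L * f)"
  unfolding in_mult_image_def by (rule exI[of _ f]) (simp add: gen_ideal_0)

lemma in_mult_image_add:
  assumes "in_mult_image gs L d g" "in_mult_image gs L d h"
  shows "in_mult_image gs L d (g + h)"
proof -
  obtain f1 f2 where f: "homog d f1" "g - L * f1 \<in> gen_ideal gs" "homog d f2" "h - L * f2 \<in> gen_ideal gs"
    using assms unfolding in_mult_image_def by blast
  have "g + h - L * (f1 + f2) = (g - L * f1) + (h - L * f2)"
    by (simp add: algebra_simps)
  then show ?thesis
    using f homog_add[OF f(1,3)] gen_ideal_add[OF f(2,4)] unfolding in_mult_image_def by metis
qed

lemma in_mult_image_mult:
  assumes "in_mult_image gs L d g" "homog e r"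
  shows "in_mult_image gs L (e + d) (r * g)"
proof -
  obtain f where f: "homog d f" "g - L * f \<in> gen_ideal gs"
    using assms(1) unfolding in_mult_image_def by blast
  have "r * g - L * (r * f) = r * (g - L * f)"
    by (simp add: algebra_simps)
  then show ?thesis
    using homog_mult[OF assms(2) f(1)] gen_ideal_mult_left[OF f(2), of r]
    unfolding in_mult_image_def by metis
qed

lemma in_mult_image_const_mult:
  "in_mult_image gs L d g \<Longrightarrow> in_mult_image gs L d (Poly_Mapping.single (0,0,0) c * g)"
  using in_mult_image_mult[OF _ homog_const] by fastforce

lemma in_mult_image_of_int_mult:
  "in_mult_image gs L d g \<Longrightarrow> in_mult_image gs L d (of_int n * g)"
  using in_mult_image_mult[OF _ homog_of_int] by fastforce

lemma in_mult_image_uminus: "in_mult_image gs L d g \<Longrightarrow> in_mult_image gs L d (- g)"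
  using in_mult_image_of_int_mult[of gs L d g "- 1"] by simp

lemma in_mult_image_diff:
  "in_mult_image gs L d g \<Longrightarrow> in_mult_image gs L d h \<Longrightarrow> in_mult_image gs L d (g - h)"
  using in_mult_image_add[of gs L d g "- h"] in_mult_image_uminus[of gs L d h] by simp

lemma in_mult_image_sum:
  "finite S \<Longrightarrow> (\<And>i. i \<in> S \<Longrightarrow> in_mult_image gs L d (f i)) \<Longrightarrow> in_mult_image gs L d (sum f S)"
  by (induction S rule: finite_induct) (auto intro: in_mult_image_add in_mult_image_0)

lemma in_mult_image_homog:
  assumes "homog e g" "\<And>m. mdeg m = e \<Longrightarrow> in_mult_image gs L d (mon m)"
  shows "in_mult_image gs L d g"
proof -
  have "in_mult_image gs L d (Poly_Mapping.single m c)" if "mdeg m = e" for m c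
    using in_mult_image_const_mult[OF assms(2)[OF that]] by (simp only: single_eq_const_mult_mon[symmetric])
  then have "in_mult_image gs L d
      (\<Sum>m\<in>Poly_Mapping.keys g. Poly_Mapping.single m (Poly_Mapping.lookup g m))"
    using assms(1) by (intro in_mult_image_sum) (auto simp: homog_def)
  then show ?thesis by (simp flip: poly_mapping_sum_single)
qed

lemma mult_surjective_Suc:
  assumes "mult_surjective gs L d"
  shows "mult_surjective gs L (Suc d)"
  unfolding mult_surjective_iff
proof (intro allI impI)
  fix g :: "'a poly3" assume "homog (Suc (Suc d)) g"
  then show "in_mult_image gs L (Suc d) g"
  proof (rule in_mult_image_homog)
    fix m assume "mdeg m = Suc (Suc d)"
    then obtain m' v where mv: "m = m' + v" "mdeg m' = Suc d" "mdeg v = 1"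
      by (rule mdeg_Suc_split)
    have "in_mult_image gs L d (mon m')"
      using assms homog_mon[OF mv(2)] unfolding mult_surjective_iff by blast
    from in_mult_image_mult[OF this homog_mon[OF mv(3)]]
    show "in_mult_image gs L (Suc d) (mon m)"
      by (simp add: mv(1) mon_mult add.commute)
  qed
qed

lemma mult_surjective_mono:
  assumes "mult_surjective gs L d0" "d0 \<le> d"
  shows "mult_surjective gs L d"
  using assms(2) by (induction d rule: dec_induct) (use assms(1) mult_surjective_Suc in auto)

definition socle_duality :: "'a::comm_ring_1 poly3 list \<Rightarrow> nat \<Rightarrow> bool" where
  "socle_duality gs s \<longleftrightarrow>
     (\<forall>i f. homog i f \<longrightarrow> f \<notin> gen_ideal gs \<longrightarrow>
        (\<exists>g. homog (s - i) g \<and> f * g \<notin> gen_ideal gs))"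

lemma socle_dualityD:
  "socle_duality gs s \<Longrightarrow> homog i f \<Longrightarrow> f \<notin> gen_ideal gs \<Longrightarrow>
    \<exists>g. homog (s - i) g \<and> f * g \<notin> gen_ideal gs"
  unfolding socle_duality_def by blast

lemma mult_surjectiveD:
  "mult_surjective gs L d \<Longrightarrow> homog (Suc d) g \<Longrightarrow> \<exists>f. g - L * f \<in> gen_ideal gs"
  unfolding mult_surjective_def by blast

lemma mult_injective_if_dual_surjective:
  assumes "socle_duality gs s" "d < s" "mult_surjective gs L (s - Suc d)"
  shows "mult_injective gs L d"
  unfolding mult_injective_def
proof (intro allI impI)
  fix f assume f: "homog d f" and Lf: "L * f \<in> gen_ideal gs"
  show "f \<in> gen_ideal gs"
  proof (rule ccontr)
    assume "f \<notin> gen_ideal gs"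
    then obtain g where g: "homog (s - d) g" "f * g \<notin> gen_ideal gs"
      using socle_dualityD[OF assms(1) f] by blast
    have "homog (Suc (s - Suc d)) g" using assms(2) g(1) by (simp add: Suc_diff_Suc)
    then obtain h where "g - L * h \<in> gen_ideal gs"
      using mult_surjectiveD[OF assms(3)] by blast
    then have "f * (g - L * h) + (L * f) * h \<in> gen_ideal gs"
      using Lf by (intro gen_ideal_add[OF gen_ideal_mult_left gen_ideal_mult_right])
    moreover have "f * (g - L * h) + (L * f) * h = f * g"
      by (simp add: algebra_simps)
    ultimately show False using g(2) by metis
  qed
qed

lemma has_WLP_by_duality:
  assumes "homog 1 L" "artinian_quot gs" "socle_duality gs s"
    and "mult_surjective gs L d0" "2 * d0 \<le> s"
  shows "has_WLP gs"
  unfolding has_WLP_def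
proof (intro conjI exI[of _ L] allI)
  fix d
  show "mult_injective gs L d \<or> mult_surjective gs L d"
  proof (cases "d0 \<le> d")
    case True
    then show ?thesis using mult_surjective_mono[OF assms(4)] by blast
  next
    case False
    then have "d < s" "d0 \<le> s - Suc d" using assms(5) by linarith+
    then have "mult_injective gs L d"
      using mult_injective_if_dual_surjective[OF assms(3)] mult_surjective_mono[OF assms(4)] by blast
    then show ?thesis ..
  qed
qed (rule assms)+

section \<open>Normal form modulo the complete intersection\<close>

text \<open>Modulo J = (x^A, y^B - x^(B-G) z^G, z^C), a monomial reduces to the monomial with exponent
  yred B G m obtained by replacing y^B by x^(B-G) z^G as often as possible; it survives in R/J
  iff that exponent lies in box A B C, and nfJ is the resulting normal form.\<close>

definition box :: "nat \<Rightarrow> nat \<Rightarrow> nat \<Rightarrow> (nat \<times> nat \<times> nat) set" where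
  "box A B C = {(i,j,k). i < A \<and> j < B \<and> k < C}"

definition yred :: "nat \<Rightarrow> nat \<Rightarrow> nat \<times> nat \<times> nat \<Rightarrow> nat \<times> nat \<times> nat" where
  "yred B G m = (case m of (i,j,k) \<Rightarrow> (i + (j div B) * (B - G), j mod B, k + (j div B) * G))"

definition red_term ::
  "nat \<Rightarrow> nat \<Rightarrow> nat \<Rightarrow> nat \<Rightarrow> nat \<times> nat \<times> nat \<Rightarrow> 'a::comm_ring_1 \<Rightarrow> 'a poly3" where
  "red_term A B C G m c =
     (if yred B G m \<in> box A B C then Poly_Mapping.single (yred B G m) c else 0)"

definition nfJ :: "nat \<Rightarrow> nat \<Rightarrow> nat \<Rightarrow> nat \<Rightarrow> 'a::comm_ring_1 poly3 \<Rightarrow> 'a poly3" where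
  "nfJ A B C G f = (\<Sum>m\<in>Poly_Mapping.keys f. red_term A B C G m (Poly_Mapping.lookup f m))"

lemma mem_box [simp]: "(i,j,k) \<in> box A B C \<longleftrightarrow> i < A \<and> j < B \<and> k < C"
  by (simp add: box_def)

lemma yred_simp [simp]:
  "yred B G (i,j,k) = (i + (j div B) * (B - G), j mod B, k + (j div B) * G)"
  by (simp add: yred_def)

lemma yred_in_box: "m \<in> box A B C \<Longrightarrow> yred B G m = m"
  by (cases m) simp

lemma red_term_0 [simp]: "red_term A B C G m 0 = 0"
  by (simp add: red_term_def)

lemma red_term_add: "red_term A B C G m (c + c') = red_term A B C G m c + red_term A B C G m c'"
  by (simp add: red_term_def single_add)

lemma nfJ_0 [simp]: "nfJ A B C G 0 = 0"
  by (simp add: nfJ_def)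

lemma nfJ_single: "nfJ A B C G (Poly_Mapping.single m c) = red_term A B C G m c"
  by (cases "c = 0") (simp_all add: nfJ_def)

lemma nfJ_add: "nfJ A B C G (f + g) = nfJ A B C G f + nfJ A B C G g"
  unfolding nfJ_def by (rule setsum_keys_plus_distrib) (simp_all add: red_term_add)

lemma nfJ_uminus: "nfJ A B C G (- f) = - nfJ A B C G f"
  using nfJ_add[of A B C G f "- f"] by (simp add: minus_unique)

lemma nfJ_diff: "nfJ A B C G (f - g) = nfJ A B C G f - nfJ A B C G g"
  using nfJ_add[of A B C G f "- g"] nfJ_uminus[of A B C G g] by simp

lemma nfJ_sum: "finite S \<Longrightarrow> nfJ A B C G (sum f S) = (\<Sum>i\<in>S. nfJ A B C G (f i))"
  by (induction S rule: finite_induct) (simp_all add: nfJ_add)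

lemma nfJ_mult_eq_sum:
  "nfJ A B C G (g * f) =
     (\<Sum>m\<in>Poly_Mapping.keys f. nfJ A B C G (g * Poly_Mapping.single m (Poly_Mapping.lookup f m)))"
  by (subst poly_mapping_sum_single[of f]) (simp add: sum_distrib_left nfJ_sum)

lemma yred_add:
  assumes "0 < B"
  shows "yred B G (m + yred B G m') = yred B G (m + m')"
proof -
  obtain i j k i' j' k' where m: "m = (i,j,k)" and m': "m' = (i',j',k')"
    by (cases m, cases m')
  have "j + j' = (j + j' mod B) + j' div B * B"
    by simp
  then have "(j + j') div B = ((j + j' mod B) + j' div B * B) div B"
    by (rule arg_cong)
  also have "\<dots> = j' div B + (j + j' mod B) div B"
    by (rule div_mult_self1) (use assms in simp)
  finally have "(j + j') div B = (j + j' mod B) div B + j' div B"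
    by simp
  moreover have "(j + j') mod B = (j + j' mod B) mod B"
    by (simp add: mod_add_right_eq)
  ultimately show ?thesis
    by (simp add: m m' add_mult_distrib)
qed

lemma yred_not_in_box_add:
  assumes "0 < B" "yred B G m' \<notin> box A B C"
  shows "yred B G (m + m') \<notin> box A B C"
proof -
  obtain i j k i' j' k' where m: "m = (i,j,k)" and m': "m' = (i',j',k')"
    by (cases m, cases m')
  have "j' div B \<le> (j + j') div B"
    by (simp add: div_le_mono)
  then have "j' div B * (B - G) \<le> (j + j') div B * (B - G)" "j' div B * G \<le> (j + j') div B * G"
    by simp_all
  moreover have "\<not> (i' + j' div B * (B - G) < A \<and> k' + j' div B * G < C)"
    using assms by (simp add: m')
  ultimately have "\<not> (i + i' + (j + j') div B * (B - G) < A \<and> k + k' + (j + j') div B * G < C)"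
    by linarith
  then show ?thesis by (simp add: m m')
qed

lemma nfJ_single_mult:
  assumes "0 < B"
  shows "nfJ A B C G (Poly_Mapping.single m c * Poly_Mapping.single m' c') =
         nfJ A B C G (Poly_Mapping.single m c * nfJ A B C G (Poly_Mapping.single m' c'))"
  using yred_add[OF assms, of G m m'] yred_not_in_box_add[OF assms, of G m' A C m]
  by (simp add: nfJ_single mult_single red_term_def)

lemma nfJ_mult_nfJ:
  assumes "0 < B"
  shows "nfJ A B C G (f * g) = nfJ A B C G (f * nfJ A B C G g)"
proof -
  let ?N = "nfJ A B C G"
  let ?S = "\<lambda>f m. Poly_Mapping.single m (Poly_Mapping.lookup f m)"
  have "?N (f * g) = ?N ((\<Sum>m\<in>Poly_Mapping.keys f. ?S f m) * (\<Sum>m'\<in>Poly_Mapping.keys g. ?S g m'))"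
    by (simp flip: poly_mapping_sum_single)
  also have "\<dots> = (\<Sum>m\<in>Poly_Mapping.keys f. \<Sum>m'\<in>Poly_Mapping.keys g. ?N (?S f m * ?S g m'))"
    by (simp add: sum_distrib_left sum_distrib_right nfJ_sum sum.swap[of _ "Poly_Mapping.keys g"])
  also have "\<dots> = (\<Sum>m\<in>Poly_Mapping.keys f. \<Sum>m'\<in>Poly_Mapping.keys g. ?N (?S f m * ?N (?S g m')))"
    by (simp only: nfJ_single_mult[OF assms])
  also have "\<dots> = ?N ((\<Sum>m\<in>Poly_Mapping.keys f. ?S f m) * ?N (\<Sum>m'\<in>Poly_Mapping.keys g. ?S g m'))"
    by (simp add: sum_distrib_left sum_distrib_right nfJ_sum sum.swap[of _ "Poly_Mapping.keys g"])
  also have "\<dots> = ?N (f * ?N g)"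
    by (simp flip: poly_mapping_sum_single)
  finally show ?thesis .
qed

lemma mdeg_yred:
  assumes "G \<le> B"
  shows "mdeg (yred B G m) = mdeg m"
proof -
  obtain i j k where m: "m = (i,j,k)" by (cases m)
  have "(j div B) * (B - G) + (j div B) * G = (j div B) * B"
    using assms by (simp flip: add_mult_distrib2)
  moreover have "mdeg (yred B G m) = i + (j div B) * (B - G) + j mod B + (k + (j div B) * G)"
    by (simp add: m)
  moreover have "mdeg m = i + j + k"
    by (simp add: m)
  ultimately show ?thesis
    using div_mult_mod_eq[of j B] by linarith
qed

lemma keys_nfJ: "Poly_Mapping.keys (nfJ A B C G f) \<subseteq> box A B C \<inter> yred B G ` Poly_Mapping.keys f"
proof -
  have "Poly_Mapping.keys (nfJ A B C G f) \<subseteq>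
      (\<Union>m\<in>Poly_Mapping.keys f. Poly_Mapping.keys (red_term A B C G m (Poly_Mapping.lookup f m)))"
    unfolding nfJ_def by (rule keys_sum)
  also have "\<dots> \<subseteq> box A B C \<inter> yred B G ` Poly_Mapping.keys f"
    by (auto simp: red_term_def simp del: yred_simp mem_box split: if_splits)
  finally show ?thesis .
qed

lemma homog_nfJ:
  assumes "G \<le> B" "homog d f"
  shows "homog d (nfJ A B C G f)"
  unfolding homog_def
proof
  fix n assume "n \<in> Poly_Mapping.keys (nfJ A B C G f)"
  then obtain m where "n = yred B G m" "m \<in> Poly_Mapping.keys f"
    using keys_nfJ by blast
  then show "mdeg n = d"
    using assms mdeg_yred unfolding homog_def by simp
qed

lemma nfJ_eq_0_if_degree_ge:
  assumes "G \<le> B" "homog d f" "A + B + C - 2 \<le> d"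
  shows "nfJ A B C G f = 0"
proof -
  have "n \<notin> Poly_Mapping.keys (nfJ A B C G f)" for n
  proof
    assume n: "n \<in> Poly_Mapping.keys (nfJ A B C G f)"
    then have "n \<in> box A B C"
      using keys_nfJ by blast
    moreover have "mdeg n = d"
      using homog_nfJ[OF assms(1,2)] n unfolding homog_def by blast
    ultimately show False
      using assms(3) by (cases n) auto
  qed
  then have "Poly_Mapping.keys (nfJ A B C G f) = {}"
    by blast
  then show ?thesis by simp
qed

text \<open>R/J is Gorenstein with socle x^(A-1) y^(B-1) z^(C-1): the complement of a standard
  monomial is the only standard monomial that multiplies it onto the socle.\<close>

lemma yred_complement_eq_socle:
  assumes "(i,j,k) \<in> box A B C" "(i',j',k') \<in> box A B C"
    and "yred B G ((A - 1 - i, B - 1 - j, C - 1 - k) + (i',j',k')) = (A - 1, B - 1, C - 1)"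
  shows "(i',j',k') = (i,j,k)"
proof (cases "B - 1 - j + j' < B")
  case True
  then show ?thesis using assms by auto
next
  case False
  moreover have "B - 1 - j + j' - B < B"
    using assms(2) by auto
  ultimately have "(B - 1 - j + j') mod B = B - 1 - j + j' - B"
    by (simp add: le_mod_geq)
  moreover have "(B - 1 - j + j') mod B = B - 1"
    using assms(3) by simp
  ultimately show ?thesis
    using assms(1,2) False by simp arith
qed

lemma lookup_nfJ_socle:
  assumes "Poly_Mapping.keys F \<subseteq> box A B C" "(i,j,k) \<in> box A B C"
  shows "Poly_Mapping.lookup (nfJ A B C G (mon (A - 1 - i, B - 1 - j, C - 1 - k) * F)) (A - 1, B - 1, C - 1)
       = Poly_Mapping.lookup F (i,j,k)"
proof -
  let ?c = "(A - 1 - i, B - 1 - j, C - 1 - k)" and ?s = "(A - 1, B - 1, C - 1)"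
  have "Poly_Mapping.lookup (red_term A B C G (?c + m) (Poly_Mapping.lookup F m)) ?s
      = (if m = (i,j,k) then Poly_Mapping.lookup F m else 0)" if "m \<in> Poly_Mapping.keys F" for m
  proof (cases "m = (i,j,k)")
    case True
    have "?s \<in> box A B C"
      using assms(2) by simp
    moreover have "?c + (i,j,k) = ?s"
      using assms(2) by simp
    ultimately show ?thesis
      using True yred_in_box[of ?s A B C G] by (simp add: red_term_def del: yred_simp mem_box)
  next
    case False
    obtain i' j' k' where m: "m = (i',j',k')" by (cases m)
    then have "yred B G (?c + m) \<noteq> ?s"
      using yred_complement_eq_socle[OF assms(2)] assms(1) that False by blast
    then show ?thesis using False by (simp add: red_term_def lookup_single when_def)
  qed
  then have "Poly_Mapping.lookup (nfJ A B C G (mon ?c * F)) ?s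
      = (\<Sum>m\<in>Poly_Mapping.keys F. if m = (i,j,k) then Poly_Mapping.lookup F m else 0)"
    by (simp add: nfJ_mult_eq_sum mon_def mult_single nfJ_single lookup_sum del: yred_simp)
  also have "\<dots> = Poly_Mapping.lookup F (i,j,k)"
    by (simp add: in_keys_iff)
  finally show ?thesis .
qed

lemma nfJ_duality:
  assumes "homog e F" "F \<noteq> 0" "Poly_Mapping.keys F \<subseteq> box A B C"
  obtains g where "homog (A + B + C - 3 - e) g" "nfJ A B C G (g * F) \<noteq> 0"
proof -
  have "Poly_Mapping.keys F \<noteq> {}"
    using assms(2) by simp
  then obtain m where "m \<in> Poly_Mapping.keys F"
    by blast
  then obtain i j k where ijk: "(i,j,k) \<in> Poly_Mapping.keys F"
    by (cases m) blast
  with assms(3) have box: "(i,j,k) \<in> box A B C" by blast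
  moreover have "i + j + k = e"
    using assms(1) ijk unfolding homog_def by fastforce
  ultimately have "homog (A + B + C - 3 - e) (mon (A - 1 - i, B - 1 - j, C - 1 - k) :: 'a poly3)"
    by (intro homog_mon) auto
  moreover have "nfJ A B C G (mon (A - 1 - i, B - 1 - j, C - 1 - k) * F) \<noteq> 0"
    using lookup_nfJ_socle[OF assms(3) box, of G] ijk by (auto simp: in_keys_iff)
  ultimately show thesis by (rule that)
qed

section \<open>The ideal I as the link J : y^BE\<close>

text \<open>A, B, C, BE, G stand for a, b, c, \<beta>, \<gamma>.\<close>

definition Igens :: "nat \<Rightarrow> nat \<Rightarrow> nat \<Rightarrow> nat \<Rightarrow> nat \<Rightarrow> 'a::comm_ring_1 poly3 list" where
  "Igens A B C BE G = [mon (A,0,0), mon (0,B,0) - mon (B-G,0,G), mon (0,0,C),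
                       mon (A+G-B, B-BE, 0), mon (0, B-BE, C-G)]"

locale linked_ideal =
  fixes A B C BE G :: nat
  assumes BE_pos: "0 < BE" and BE_less_B: "BE < B"
    and G_pos: "0 < G" and G_less_B: "G < B" and G_less_C: "G < C"
    and B_less: "B < A + G"
begin

abbreviation I :: "'a::comm_ring_1 poly3 set" where
  "I \<equiv> gen_ideal (Igens A B C BE G)"

abbreviation nf :: "'a::comm_ring_1 poly3 \<Rightarrow> 'a poly3" where
  "nf \<equiv> nfJ A B C G"

abbreviation Y :: "'a::comm_ring_1 poly3" where
  "Y \<equiv> mon (0,BE,0)"

lemma B_pos: "0 < B"
  using BE_pos BE_less_B by simp

lemma Igens_mem:
  "mon (A,0,0) \<in> I" "mon (0,B,0) - mon (B-G,0,G) \<in> I" "mon (0,0,C) \<in> I"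
  "mon (A+G-B, B-BE, 0) \<in> I" "mon (0, B-BE, C-G) \<in> I"
proof -
  have "Igens A B C BE G ! i \<in> I" if "i < 5" for i
    using that by (intro gen_ideal_nth) (simp add: Igens_def)
  from this[of 0] this[of 1] this[of 2] this[of 3] this[of 4] show
    "mon (A,0,0) \<in> I" "mon (0,B,0) - mon (B-G,0,G) \<in> I" "mon (0,0,C) \<in> I"
    "mon (A+G-B, B-BE, 0) \<in> I" "mon (0, B-BE, C-G) \<in> I"
    by (simp_all add: Igens_def numeral_eq_Suc)
qed

lemma single_mem_I:
  assumes "A \<le> i \<or> C \<le> k \<or> (B - BE \<le> j \<and> (A + G - B \<le> i \<or> C - G \<le> k))"
  shows "Poly_Mapping.single (i,j,k) c \<in> I"
  using assms
proof (elim disjE conjE)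
  assume "A \<le> i" then show ?thesis
    by (intro single_mem_gen_ideal[OF Igens_mem(1), of _ "(i - A, j, k)"]) simp
next
  assume "C \<le> k" then show ?thesis
    by (intro single_mem_gen_ideal[OF Igens_mem(3), of _ "(i, j, k - C)"]) simp
next
  assume "B - BE \<le> j" "A + G - B \<le> i" then show ?thesis
    by (intro single_mem_gen_ideal[OF Igens_mem(4), of _ "(i - (A+G-B), j - (B-BE), k)"]) simp
next
  assume "B - BE \<le> j" "C - G \<le> k" then show ?thesis
    by (intro single_mem_gen_ideal[OF Igens_mem(5), of _ "(i, j - (B-BE), k - (C-G))"]) simp
qed

lemma single_sub_red_term_mem_I:
  "Poly_Mapping.single (i,j,k) c - red_term A B C G (i,j,k) c \<in> I"
proof (induction j arbitrary: i k rule: less_induct)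
  case (less j)
  show ?case
  proof (cases "j < B")
    case True
    then show ?thesis
      using single_mem_I[of i k j c] by (auto simp: red_term_def gen_ideal_0)
  next
    case False
    let ?m = "(i + (B - G), j - B, k + G)"
    have "yred B G (i,j,k) = yred B G ?m"
      using False B_pos by (simp add: le_div_geq le_mod_geq algebra_simps)
    then have red: "red_term A B C G (i,j,k) c = red_term A B C G ?m c"
      by (simp add: red_term_def del: yred_simp)
    have "Poly_Mapping.single (i,j,k) c - Poly_Mapping.single ?m c
        = Poly_Mapping.single (i, j - B, k) c * (mon (0,B,0) - mon (B-G,0,G))"
      using False by (simp add: right_diff_distrib mon_def mult_single)
    then have "Poly_Mapping.single (i,j,k) c - Poly_Mapping.single ?m c \<in> I"
      using gen_ideal_mult_left[OF Igens_mem(2)] by simp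
    moreover have "Poly_Mapping.single ?m c - red_term A B C G ?m c \<in> I"
      using less.IH[of "j - B"] False B_pos by simp
    ultimately show ?thesis
      using gen_ideal_add red by fastforce
  qed
qed

lemma sub_nf_mem_I: "f - nf f \<in> I"
proof -
  have "f - nf f = (\<Sum>m\<in>Poly_Mapping.keys f.
      Poly_Mapping.single m (Poly_Mapping.lookup f m) - red_term A B C G m (Poly_Mapping.lookup f m))"
    by (subst (1) poly_mapping_sum_single) (simp add: nfJ_def sum_subtractf)
  also have "\<dots> \<in> I"
    by (rule gen_ideal_sum) (auto intro: single_sub_red_term_mem_I)
  finally show ?thesis .
qed

lemma nf_Y_mult_Igens:
  assumes "i < length (Igens A B C BE G :: 'a::comm_ring_1 poly3 list)"
  shows "nf (Y * (Igens A B C BE G ! i) :: 'a poly3) = 0"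
proof -
  have BE: "BE div B = 0" "BE mod B = BE" "(BE + B) div B = 1" "(BE + B) mod B = BE"
    using BE_less_B by (simp_all add: le_div_geq le_mod_geq)
  have "i = 0 \<or> i = 1 \<or> i = 2 \<or> i = 3 \<or> i = 4"
    using assms by (auto simp: Igens_def)
  then show ?thesis
    using BE BE_less_B G_pos G_less_B G_less_C B_less less_diff_conv2[of G B A]
    by (elim disjE)
      (simp_all add: Igens_def mon_def mult_single right_diff_distrib nfJ_diff nfJ_single red_term_def)
qed

lemma nf_Y_mult_eq_0_if_mem:
  assumes "f \<in> I"
  shows "nf (Y * f) = 0"
proof -
  let ?gs = "Igens A B C BE G :: 'a poly3 list"
  obtain q where f: "f = (\<Sum>i<length ?gs. q i * ?gs ! i)"
    using assms unfolding gen_ideal_def by blast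
  have "nf (Y * f) = (\<Sum>i<length ?gs. nf (q i * (Y * ?gs ! i)))"
    unfolding f by (simp add: sum_distrib_left nfJ_sum algebra_simps)
  also have "\<dots> = (\<Sum>i<length ?gs. nf (q i * nf (Y * ?gs ! i)))"
    by (intro sum.cong refl nfJ_mult_nfJ[OF B_pos])
  also have "\<dots> = 0"
    by (simp add: nf_Y_mult_Igens)
  finally show ?thesis .
qed

definition standard :: "nat \<times> nat \<times> nat \<Rightarrow> bool" where
  "standard m \<longleftrightarrow> m \<in> box A B C \<and>
     (case m of (i,j,k) \<Rightarrow> \<not> (B - BE \<le> j \<and> (A + G - B \<le> i \<or> C - G \<le> k)))"

lemma single_mem_I_if_not_standard:
  "m \<in> box A B C \<Longrightarrow> \<not> standard m \<Longrightarrow> Poly_Mapping.single m c \<in> I"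
  by (cases m) (auto simp: standard_def intro: single_mem_I)

lemma yred_shift:
  assumes "j < B"
  shows "yred B G (i, j + BE, k) =
    (if j + BE < B then (i, j + BE, k) else (i + (B - G), j + BE - B, k + G))"
proof (cases "j + BE < B")
  case False
  then have "(j + BE) div B = 1" "(j + BE) mod B = j + BE - B"
    using assms BE_less_B by (simp_all add: le_div_geq le_mod_geq)
  then show ?thesis using False by simp
qed simp

lemma yred_shift_standard:
  assumes "standard m"
  shows "yred B G (m + (0,BE,0)) \<in> box A B C"
  using assms BE_less_B G_less_B B_less
  by (cases m) (auto simp: standard_def yred_shift simp del: yred_simp)

lemma nf_Y_mult_standard:
  assumes "standard m"
  shows "nf (Y * Poly_Mapping.single m c) = Poly_Mapping.single (yred B G (m + (0,BE,0))) c"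
  using yred_shift_standard[OF assms]
  by (simp add: mon_def mult_single nfJ_single red_term_def add.commute del: yred_simp mem_box)

lemma yred_shift_inj:
  assumes "standard m" "standard m'" "yred B G (m + (0,BE,0)) = yred B G (m' + (0,BE,0))"
  shows "m = m'"
proof -
  obtain i j k i' j' k' where m: "m = (i,j,k)" and m': "m' = (i',j',k')"
    by (cases m, cases m')
  show ?thesis
    using assms BE_pos G_pos G_less_B
    by (auto simp: m m' standard_def yred_shift simp del: yred_simp split: if_splits)
qed

lemma lookup_nf_Y_mult:
  assumes "Poly_Mapping.keys F \<subseteq> box A B C" "standard m0"
  shows "Poly_Mapping.lookup (nf (Y * F)) (yred B G (m0 + (0,BE,0))) = Poly_Mapping.lookup F m0"
proof -
  let ?S = "\<lambda>m. Poly_Mapping.single m (Poly_Mapping.lookup F m)"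
  have "Poly_Mapping.lookup (nf (Y * ?S m)) (yred B G (m0 + (0,BE,0)))
      = (if m = m0 then Poly_Mapping.lookup F m else 0)" if "m \<in> Poly_Mapping.keys F" for m
  proof (cases "standard m")
    case True
    have "yred B G (m + (0,BE,0)) = yred B G (m0 + (0,BE,0)) \<longleftrightarrow> m = m0"
      using yred_shift_inj[OF True assms(2)] by blast
    then show ?thesis
      by (simp add: nf_Y_mult_standard[OF True] lookup_single when_def del: yred_simp)
  next
    case False
    then have "nf (Y * ?S m) = 0" "m \<noteq> m0"
      using assms that by (blast intro: nf_Y_mult_eq_0_if_mem single_mem_I_if_not_standard)+
    then show ?thesis by simp
  qed
  then have "Poly_Mapping.lookup (nf (Y * F)) (yred B G (m0 + (0,BE,0)))
      = (\<Sum>m\<in>Poly_Mapping.keys F. if m = m0 then Poly_Mapping.lookup F m else 0)"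
    unfolding nfJ_mult_eq_sum[of A B C G Y F] lookup_sum by (rule sum.cong[OF refl])
  also have "\<dots> = Poly_Mapping.lookup F m0"
    by (simp add: in_keys_iff)
  finally show ?thesis .
qed

lemma mem_I_if_nf_Y_mult_eq_0:
  assumes "nf (Y * f) = 0"
  shows "f \<in> I"
proof -
  let ?F = "nf f"
  have box: "Poly_Mapping.keys ?F \<subseteq> box A B C"
    using keys_nfJ by blast
  have "nf (Y * ?F) = 0"
    using assms nfJ_mult_nfJ[OF B_pos] by metis
  have "\<not> standard m" if "m \<in> Poly_Mapping.keys ?F" for m
  proof
    assume "standard m"
    then have "Poly_Mapping.lookup ?F m = 0"
      using lookup_nf_Y_mult[OF box] \<open>nf (Y * ?F) = 0\<close> by simp
    then show False
      using that by (simp add: in_keys_iff)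
  qed
  then have "(\<Sum>m\<in>Poly_Mapping.keys ?F. Poly_Mapping.single m (Poly_Mapping.lookup ?F m)) \<in> I"
    using box by (intro gen_ideal_sum single_mem_I_if_not_standard) auto
  then have "?F \<in> I"
    by (simp flip: poly_mapping_sum_single)
  from gen_ideal_add[OF sub_nf_mem_I[of f] this] show ?thesis
    by simp
qed

theorem mem_I_iff: "f \<in> I \<longleftrightarrow> nf (Y * f) = 0"
  using nf_Y_mult_eq_0_if_mem mem_I_if_nf_Y_mult_eq_0 by blast

theorem socle_duality_I: "socle_duality (Igens A B C BE G) (A + B + C - 3 - BE)"
  unfolding socle_duality_def
proof (intro allI impI)
  fix i and f :: "'a poly3"
  assume f: "homog i f" "f \<notin> I"
  let ?F = "nf (Y * f)"
  have "homog (BE + i) ?F"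
    using G_less_B by (intro homog_nfJ homog_mult homog_mon f(1)) simp_all
  moreover have "?F \<noteq> 0"
    using f(2) mem_I_iff by blast
  moreover have "Poly_Mapping.keys ?F \<subseteq> box A B C"
    using keys_nfJ by blast
  ultimately obtain g where g: "homog (A + B + C - 3 - (BE + i)) g" "nf (g * ?F) \<noteq> 0"
    by (rule nfJ_duality)
  have "nf (Y * (f * g)) = nf (g * ?F)"
    using nfJ_mult_nfJ[OF B_pos, of A C G g "Y * f"] by (simp add: ac_simps)
  then have "f * g \<notin> I"
    using g(2) mem_I_iff by metis
  then show "\<exists>g. homog (A + B + C - 3 - BE - i) g \<and> f * g \<notin> I"
    using g(1) unfolding diff_diff_left add.assoc by blast
qed

theorem artinian_quot_I: "artinian_quot (Igens A B C BE G)"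
  unfolding artinian_quot_def
proof (intro exI allI impI)
  fix d and f :: "'a poly3"
  assume "A + B + C - 2 \<le> d" "homog d f"
  then have "nf f = 0"
    using G_less_B by (intro nfJ_eq_0_if_degree_ge) simp_all
  then show "f \<in> I"
    using sub_nf_mem_I[of f] by simp
qed

end

section \<open>Surjectivity of multiplication by y - x\<close>

lemma homog_y_sub_x: "homog 1 (varY - varX)"
  unfolding varX_def varY_def by (intro homog_diff homog_single) simp_all

lemma in_mult_image_y_sub_x_mon:
  assumes "i + j + k = d"
  shows "in_mult_image gs (varY - varX) d (mon (i, Suc j, k) - mon (Suc i, j, k) :: 'a::comm_ring_1 poly3)"
proof -
  have "((varY - varX) * mon (i,j,k) :: 'a poly3) = mon (i, Suc j, k) - mon (Suc i, j, k)"
    by (simp add: varX_def varY_def left_diff_distrib mon_def mult_single)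
  then show ?thesis
    using in_mult_image_L_mult[OF homog_mon, of "(i,j,k)" d gs "varY - varX"] assms by simp
qed

lemma in_mult_image_y_sub_x_shift:
  assumes "i + j + k = Suc d"
  shows "in_mult_image gs (varY - varX) d (mon (i, j, k) - mon (i + j, 0, k) :: 'a::comm_ring_1 poly3)"
  using assms
proof (induction j arbitrary: i)
  case 0
  then show ?case by (simp add: in_mult_image_0)
next
  case (Suc j)
  have "in_mult_image gs (varY - varX) d
      ((mon (i, Suc j, k) - mon (Suc i, j, k)) + (mon (Suc i, j, k) - mon (Suc i + j, 0, k)) :: 'a poly3)"
    using Suc by (intro in_mult_image_add in_mult_image_y_sub_x_mon Suc.IH) simp_all
  then show ?case by simp
qed

text \<open>Modulo y - x every monomial equals a monomial in x and z, so those suffice.\<close>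

lemma mult_surjective_y_sub_x_if_xz:
  assumes "\<And>i. i \<le> Suc d \<Longrightarrow> in_mult_image gs (varY - varX) d (mon (i, 0, Suc d - i))"
  shows "mult_surjective gs (varY - varX :: 'a::comm_ring_1 poly3) d"
  unfolding mult_surjective_iff
proof (intro allI impI)
  fix g :: "'a poly3" assume "homog (Suc d) g"
  then show "in_mult_image gs (varY - varX) d g"
  proof (rule in_mult_image_homog)
    fix m assume "mdeg m = Suc d"
    then obtain i j k where m: "m = (i,j,k)" "i + j + k = Suc d"
      by (cases m) auto
    have "in_mult_image gs (varY - varX) d
        ((mon (i,j,k) - mon (i + j, 0, k)) + mon (i + j, 0, Suc d - (i + j)) :: 'a poly3)"
      using m(2) by (intro in_mult_image_add in_mult_image_y_sub_x_shift assms) simp_all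
    moreover have "Suc d - (i + j) = k"
      using m(2) by simp
    ultimately show "in_mult_image gs (varY - varX) d (mon m)"
      using m by simp
  qed
qed

context linked_ideal
begin

abbreviation in_image :: "nat \<Rightarrow> 'a::comm_ring_1 poly3 \<Rightarrow> bool" where
  "in_image d g \<equiv> in_mult_image (Igens A B C BE G) (varY - varX) d g"

lemma in_image_xz_if_C_le:
  "i + k = Suc d \<Longrightarrow> C \<le> k \<Longrightarrow> in_image d (mon (i,0,k))"
  unfolding mon_def by (intro in_mult_image_of_mem single_mem_I) simp

lemma in_image_xz_via_y:
  assumes "i + k = Suc d" "B - BE \<le> i" "A + G - B \<le> i - (B - BE) \<or> C - G \<le> k"
  shows "in_image d (mon (i,0,k))"
proof -
  have "in_image d (mon (i - (B - BE), B - BE, k) - mon (i - (B - BE) + (B - BE), 0, k))"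
    using assms by (intro in_mult_image_y_sub_x_shift) simp
  moreover have "in_image d (mon (i - (B - BE), B - BE, k))"
    unfolding mon_def using assms(3) by (intro in_mult_image_of_mem single_mem_I) simp
  ultimately have "in_image d (mon (i - (B - BE) + (B - BE), 0, k))"
    using in_mult_image_diff by fastforce
  then show ?thesis using assms(2) by simp
qed

lemma in_image_xz_step:
  assumes "i + k = Suc d" "B - G \<le> i" "G \<le> k"
  shows "in_image d (mon (i,0,k) - mon (i + G, 0, k - G))"
proof -
  have eq: "(mon (i,0,k) - mon (i - (B - G), B, k - G) :: 'a poly3) =
        - (mon (i - (B - G), 0, k - G) * (mon (0,B,0) - mon (B-G,0,G)))"
    using assms by (simp add: right_diff_distrib mon_mult)
  have "in_image d (mon (i,0,k) - mon (i - (B - G), B, k - G) :: 'a poly3)"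
    unfolding eq by (intro in_mult_image_of_mem gen_ideal_uminus gen_ideal_mult_left Igens_mem(2))
  moreover have "in_image d (mon (i - (B - G), B, k - G) - mon (i - (B - G) + B, 0, k - G) :: 'a poly3)"
    using assms G_less_B by (intro in_mult_image_y_sub_x_shift) simp
  ultimately have "in_image d ((mon (i,0,k) - mon (i - (B - G), B, k - G)) +
      (mon (i - (B - G), B, k - G) - mon (i - (B - G) + B, 0, k - G)) :: 'a poly3)"
    by (rule in_mult_image_add)
  moreover have "i - (B - G) + B = i + G"
    using assms G_less_B by simp
  ultimately show ?thesis by simp
qed

text \<open>x^i z^k is moved in steps (-G, +G) until it is killed by z^C or, after trading x^(B-BE)
  for y^(B-BE), by the fifth generator.\<close>

lemma mult_surjective_y_sub_x_walk_down:
  assumes "B + C \<le> d + 2 + BE" "B + C \<le> d + 2 + G"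
  shows "mult_surjective (Igens A B C BE G) (varY - varX :: 'a::comm_ring_1 poly3) d"
proof (rule mult_surjective_y_sub_x_if_xz)
  fix i assume "i \<le> Suc d"
  then show "in_image d (mon (i, 0, Suc d - i) :: 'a poly3)"
  proof (induction i rule: less_induct)
    case (less i)
    consider "i + C \<le> Suc d" | "Suc d < i + C" "i + C \<le> Suc d + G" | "Suc d + G < i + C"
      by linarith
    then show ?case
    proof cases
      case 1
      then show ?thesis by (intro in_image_xz_if_C_le) simp_all
    next
      case 2
      then show ?thesis using assms less.prems by (intro in_image_xz_via_y) arith+
    next
      case 3
      have "in_image d (mon (i - G, 0, Suc d - (i - G)) - mon (i - G + G, 0, Suc d - (i - G) - G) :: 'a poly3)"
        using 3 less.prems assms G_less_B by (intro in_image_xz_step) simp_all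
      moreover have "in_image d (mon (i - G, 0, Suc d - (i - G)) :: 'a poly3)"
        using 3 less.prems assms G_pos G_less_B by (intro less.IH) simp_all
      moreover have "i - G + G = i" "Suc d - (i - G) - G = Suc d - i"
        using 3 less.prems assms G_less_B by simp_all
      ultimately show ?thesis
        using in_mult_image_diff by fastforce
    qed
  qed
qed

text \<open>x^i z^k is moved in steps (+G, -G) until it is killed by z^C or, after trading x^(B-BE)
  for y^(B-BE), by the fourth or fifth generator.\<close>

lemma mult_surjective_y_sub_x_walk_up:
  assumes "B + C \<le> d + 2 + BE" "B + C \<le> d + 2 + 2 * G" "A + 2 * G \<le> d + BE + 2" "G < BE"
  shows "mult_surjective (Igens A B C BE G) (varY - varX :: 'a::comm_ring_1 poly3) d"
proof (rule mult_surjective_y_sub_x_if_xz)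
  fix i assume "i \<le> Suc d"
  then show "in_image d (mon (i, 0, Suc d - i) :: 'a poly3)"
  proof (induction "Suc d - i" arbitrary: i rule: less_induct)
    case (less i)
    consider "A + G - BE \<le> i" | "i < A + G - BE" "i < B - G" "i + C \<le> Suc d"
      | "i < A + G - BE" "i < B - G" "Suc d < i + C" | "i < A + G - BE" "B - G \<le> i"
      by linarith
    then show ?case
    proof cases
      case 1
      then show ?thesis
        using less.prems B_less BE_less_B by (intro in_image_xz_via_y) arith+
    next
      case 2
      then show ?thesis by (intro in_image_xz_if_C_le) simp_all
    next
      case 3
      then show ?thesis using assms less.prems by (intro in_image_xz_via_y) arith+
    next
      case 4
      have "in_image d (mon (i, 0, Suc d - i) - mon (i + G, 0, Suc d - i - G) :: 'a poly3)"
        using 4 less.prems assms G_less_B B_less by (intro in_image_xz_step) simp_all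
      moreover have "in_image d (mon (i + G, 0, Suc d - (i + G)) :: 'a poly3)"
        using 4 less.prems assms G_pos B_less by (intro less.hyps) simp_all
      ultimately show ?thesis
        using in_mult_image_add by fastforce
    qed
  qed
qed

end

section \<open>A cubic relation forcing surjectivity\<close>

lemma in_mult_image_power_add_L:
  assumes "homog 1 a" "homog 1 L"
  shows "in_mult_image gs L d ((a + L) ^ Suc d - a ^ Suc d)"
proof (induction d)
  case 0
  then show ?case using in_mult_image_L_mult[of 0 1 gs L] by (simp add: homog_of_int[of 1, simplified])
next
  case (Suc d)
  have "(a + L) ^ Suc (Suc d) - a ^ Suc (Suc d)
      = (a + L) * ((a + L) ^ Suc d - a ^ Suc d) + L * a ^ Suc d"
    by (simp add: algebra_simps)
  moreover have "in_mult_image gs L (Suc d) ((a + L) * ((a + L) ^ Suc d - a ^ Suc d))"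
    using in_mult_image_mult[OF Suc homog_add[OF assms]] by simp
  moreover have "in_mult_image gs L (Suc d) (L * a ^ Suc d)"
    by (intro in_mult_image_L_mult homog_power assms(1))
  ultimately show ?case
    by (simp add: in_mult_image_add)
qed

lemma in_mult_image_cancel_of_int:
  fixes g :: "'a::field_char_0 poly3"
  assumes "in_mult_image gs L d (of_int c * g)" "c \<noteq> 0"
  shows "in_mult_image gs L d g"
proof -
  have "Poly_Mapping.single (0,0,0) (inverse (of_int c :: 'a)) * of_int c = (1 :: 'a poly3)"
    using assms(2) by (simp add: mult_single zero_nat3[symmetric] flip: single_of_int)
  then show ?thesis
    using in_mult_image_const_mult[OF assms(1), of "inverse (of_int c)"]
    by (simp add: mult.assoc[symmetric])
qed

lemma one_plus_7n_le_8_power: "1 + 7 * int n \<le> 8 ^ n"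
proof (induction n)
  case (Suc n)
  moreover have "(1::int) \<le> 8 ^ n" by simp
  ultimately show ?case by simp
qed simp

lemma two_neg8_power_ne:
  assumes "1 \<le> n"
  shows "2 * (-8::int) ^ n \<noteq> 9 * int n + 2"
proof
  assume "2 * (-8::int) ^ n = 9 * int n + 2"
  then have "\<bar>2 * (-8::int) ^ n\<bar> = 9 * int n + 2"
    by simp
  then have "2 * 8 ^ n = 9 * int n + 2"
    by (simp add: abs_mult power_abs)
  then show False
    using one_plus_7n_le_8_power[of n] assms by simp
qed

text \<open>Modulo L = 3y - 2p - q the degree n forms are spanned by E t = p^(n-t) (y-p)^t, because
  q = p + 3(y-p) there; the relations of gs then leave a 2 x 2 system for E 1, E 2 with
  determinant 9n + 2 - 2(-8)^n, which is nonzero.\<close>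

locale cubic_family =
  fixes gs :: "'a::field_char_0 poly3 list" and p q y :: "'a poly3" and n :: nat
  assumes homog_p: "homog 1 p" and homog_q: "homog 1 q" and homog_y: "homog 1 y"
    and n_ge_3: "3 \<le> n"
    and p_power_mem: "p ^ n \<in> gen_ideal gs" and q_power_mem: "q ^ n \<in> gen_ideal gs"
    and cubic_mem: "y ^ 3 - p ^ 2 * q \<in> gen_ideal gs"
    and p_y_mem: "p ^ (n - 2) * y ^ 2 \<in> gen_ideal gs"
begin

definition L :: "'a poly3" where "L = 3 * y - 2 * p - q"
definition V :: "'a poly3" where "V = y - p"
definition E :: "nat \<Rightarrow> 'a poly3" where "E t = p ^ (n - t) * V ^ t"

abbreviation W :: "'a poly3 \<Rightarrow> bool" where
  "W \<equiv> in_mult_image gs L (n - 1)"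

lemma p_add_V: "p + V = y"
  by (simp add: V_def)

lemma q_add_L: "q + L = p + 3 * V"
  by (simp add: L_def V_def algebra_simps)

lemma homog_V: "homog 1 V"
  unfolding V_def by (rule homog_diff[OF homog_y homog_p])

lemma W_L_mult: "homog (n - 1) h \<Longrightarrow> W (L * h)"
  by (rule in_mult_image_L_mult)

lemma W_E_recurrence:
  assumes "t + 3 \<le> n"
  shows "W (E (t + 3) + 3 * E (t + 2))"
proof -
  define r where "r = n - 3 - t"
  have n: "n = r + t + 3" using assms by (simp add: r_def)
  have "y ^ 3 - p ^ 2 * q = V ^ 3 + 3 * p * V ^ 2 + L * p ^ 2"
    by (simp add: L_def V_def power2_eq_square power3_eq_cube algebra_simps)
  then have "p ^ r * V ^ t * (y ^ 3 - p ^ 2 * q)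
      = (E (t + 3) + 3 * E (t + 2)) + L * (p ^ (r + 2) * V ^ t)"
    unfolding E_def unfolding n
    by (simp add: algebra_simps power_add power2_eq_square power3_eq_cube numeral_eq_Suc)
  moreover have "W (p ^ r * V ^ t * (y ^ 3 - p ^ 2 * q))"
    by (intro in_mult_image_of_mem gen_ideal_mult_left cubic_mem)
  moreover have "W (L * (p ^ (r + 2) * V ^ t))"
    using homog_mult[OF homog_power[OF homog_p, of "r + 2"] homog_power[OF homog_V, of t]] n
    by (intro W_L_mult) simp
  ultimately show ?thesis
    by (metis in_mult_image_diff add_diff_cancel_right')
qed

text \<open>E t = (-3)^(t-2) E 2 modulo the image, scaled by 9 * 3^t to avoid the exponent t - 2.\<close>

definition geo_defect :: "nat \<Rightarrow> 'a poly3" where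
  "geo_defect t = of_int (9 * 3 ^ t) * E t - of_int ((-9) ^ t) * E 2"

lemma W_E_geometric:
  assumes "2 \<le> t" "t \<le> n"
  shows "W (geo_defect t)"
  using assms
proof (induction t rule: dec_induct)
  case base
  then show ?case by (simp add: geo_defect_def in_mult_image_0)
next
  case (step t)
  have "t - 2 + 3 = Suc t" "t - 2 + 2 = t"
    using step by simp_all
  moreover have "W (of_int (9 * 3 ^ Suc t) * (E (t - 2 + 3) + 3 * E (t - 2 + 2))
      - of_int 9 * (of_int (9 * 3 ^ t) * E t - of_int ((-9) ^ t) * E 2))"
    using step by (intro in_mult_image_diff in_mult_image_of_int_mult W_E_recurrence
        step.IH[unfolded geo_defect_def]) simp_all
  ultimately have "W (of_int (9 * 3 ^ Suc t) * (E (Suc t) + 3 * E t)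
      - of_int 9 * (of_int (9 * 3 ^ t) * E t - of_int ((-9) ^ t) * E 2))"
    by (simp only:)
  moreover have "of_int (9 * 3 ^ Suc t) * (E (Suc t) + 3 * E t)
      - of_int 9 * (of_int (9 * 3 ^ t) * E t - of_int ((-9) ^ t) * E 2)
      = of_int (9 * 3 ^ Suc t) * E (Suc t) - of_int ((-9) ^ Suc t) * E 2"
  proof -
    have "of_int (9 * 3 ^ Suc t) = 27 * (of_int (3 ^ t) :: 'a poly3)"
      "of_int (9 * 3 ^ t) = 9 * (of_int (3 ^ t) :: 'a poly3)"
      "of_int ((-9) ^ Suc t) = -9 * (of_int ((-9) ^ t) :: 'a poly3)"
      by simp_all
    then show ?thesis by (simp add: algebra_simps)
  qed
  ultimately show ?case
    by (simp only: geo_defect_def)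
qed

lemma W_E_0: "W (E 0)"
  unfolding E_def by (simp add: in_mult_image_of_mem p_power_mem)

lemma W_two_E_1_add_E_2: "W (2 * E 1 + E 2)"
proof -
  define r where "r = n - 2"
  have n: "n = r + 2"
    using n_ge_3 by (simp add: r_def)
  have "y ^ 2 = p ^ 2 + 2 * p * V + V ^ 2"
    by (simp add: V_def power2_eq_square algebra_simps)
  then have "p ^ (n - 2) * y ^ 2 = E 0 + (2 * E 1 + E 2)"
    unfolding E_def unfolding n by (simp add: algebra_simps power2_eq_square)
  then have "W (E 0 + (2 * E 1 + E 2))"
    using in_mult_image_of_mem[OF p_y_mem] by metis
  from in_mult_image_diff[OF this W_E_0] show ?thesis
    by simp
qed

lemma binomial_E: "(p + 3 * V) ^ n = (\<Sum>t\<le>n. of_int (int (n choose t) * 3 ^ t) * E t)"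
  unfolding E_def using binomial_ring[of "3 * V" p n]
  by (simp add: add.commute power_mult_distrib algebra_simps)

lemma binomial_geo_defect:
  "of_int 9 * (p + 3 * V) ^ n - of_int ((-8) ^ n) * E 2
     = (\<Sum>t\<le>n. of_int (int (n choose t)) * geo_defect t)"
proof -
  have "(-8 :: int) ^ n = (\<Sum>t\<le>n. int (n choose t) * (-9) ^ t)"
    using binomial_ring[of "-9 :: int" 1 n] by simp
  then have "of_int ((-8) ^ n) * E 2 = (\<Sum>t\<le>n. of_int (int (n choose t) * (-9) ^ t) * E 2)"
    by (simp add: sum_distrib_right del: of_int_mult of_int_power)
  moreover have "of_int 9 * (p + 3 * V) ^ n
      = (\<Sum>t\<le>n. of_int 9 * (of_int (int (n choose t) * 3 ^ t) * E t))"
    by (simp add: binomial_E sum_distrib_left del: of_int_mult of_int_power)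
  ultimately have "of_int 9 * (p + 3 * V) ^ n - of_int ((-8) ^ n) * E 2
      = (\<Sum>t\<le>n. of_int 9 * (of_int (int (n choose t) * 3 ^ t) * E t)
          - of_int (int (n choose t) * (-9) ^ t) * E 2)"
    by (simp add: sum_subtractf del: of_int_mult of_int_power)
  also have "\<dots> = (\<Sum>t\<le>n. of_int (int (n choose t)) * geo_defect t)"
    by (intro sum.cong refl) (simp add: geo_defect_def algebra_simps)
  finally show ?thesis .
qed

lemma homog_L: "homog 1 L"
  unfolding L_def using homog_y homog_p homog_q
  by (intro homog_diff homog_of_int_mult[where n = 3, simplified] homog_of_int_mult[where n = 2, simplified])

lemma W_binomial: "W ((p + 3 * V) ^ n)"
proof -
  have n: "Suc (n - 1) = n"
    using n_ge_3 by simp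
  from in_mult_image_add[OF in_mult_image_power_add_L[OF homog_q homog_L, of gs "n - 1"]
      in_mult_image_of_mem[OF q_power_mem]]
  show ?thesis
    unfolding n q_add_L by simp
qed

lemma W_binomial_relation: "W (of_int (27 * int n) * E 1 + of_int ((-8) ^ n - 1 + 9 * int n) * E 2)"
proof -
  let ?P = "of_int 9 * (p + 3 * V) ^ n" and ?F = "of_int ((-8) ^ n) * E 2"
  define m where "m = n - 2"
  have n: "n = Suc (Suc m)"
    using n_ge_3 by (simp add: m_def)
  have "(\<Sum>t\<le>n. of_int (int (n choose t)) * geo_defect t) = geo_defect 0 + (of_int (int n) * geo_defect 1
      + (\<Sum>t\<le>m. of_int (int (n choose (t + 2))) * geo_defect (t + 2)))"
    unfolding n by (simp only: sum.atMost_Suc_shift) simp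
  then have eq: "?P - ?F - geo_defect 0 - of_int (int n) * geo_defect 1
      = (\<Sum>t\<le>m. of_int (int (n choose (t + 2))) * geo_defect (t + 2))"
    unfolding binomial_geo_defect by (simp add: algebra_simps)
  have "W (\<Sum>t\<le>m. of_int (int (n choose (t + 2))) * geo_defect (t + 2))"
    using n by (intro in_mult_image_sum in_mult_image_of_int_mult W_E_geometric) auto
  then have "W (?P - ?F - geo_defect 0 - of_int (int n) * geo_defect 1)"
    unfolding eq .
  moreover have "W (?P - of_int 9 * E 0)"
    by (intro in_mult_image_diff in_mult_image_of_int_mult W_E_0 W_binomial)
  ultimately have "W ((?P - of_int 9 * E 0) - (?P - ?F - geo_defect 0 - of_int (int n) * geo_defect 1))"
    by (rule in_mult_image_diff[rotated])
  moreover have "(?P - of_int 9 * E 0) - (?P - ?F - geo_defect 0 - of_int (int n) * geo_defect 1)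
      = of_int (27 * int n) * E 1 + of_int ((-8) ^ n - 1 + 9 * int n) * E 2"
    by (simp add: geo_defect_def algebra_simps)
  ultimately show ?thesis
    by simp
qed

lemma W_E_1_E_2: "W (E 1)" "W (E 2)"
proof -
  let ?c = "(-8) ^ n - 1 + 9 * int n" and ?\<delta> = "9 * int n + 2 - 2 * (-8) ^ n"
  have \<delta>: "?\<delta> \<noteq> 0"
    using two_neg8_power_ne[of n] n_ge_3 by simp
  have "W (of_int (27 * int n) * E 1 + of_int ?c * E 2 - of_int ?c * (2 * E 1 + E 2))"
    by (intro in_mult_image_diff in_mult_image_of_int_mult W_binomial_relation W_two_E_1_add_E_2)
  moreover have "of_int (27 * int n) * E 1 + of_int ?c * E 2 - of_int ?c * (2 * E 1 + E 2)
      = of_int ?\<delta> * E 1"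
    by (simp add: algebra_simps)
  ultimately show "W (E 1)"
    using in_mult_image_cancel_of_int \<delta> by metis
  have "W (of_int (27 * int n) * (2 * E 1 + E 2)
      - of_int 2 * (of_int (27 * int n) * E 1 + of_int ?c * E 2))"
    by (intro in_mult_image_diff in_mult_image_of_int_mult W_binomial_relation W_two_E_1_add_E_2)
  moreover have "of_int (27 * int n) * (2 * E 1 + E 2)
      - of_int 2 * (of_int (27 * int n) * E 1 + of_int ?c * E 2) = of_int ?\<delta> * E 2"
    by (simp add: algebra_simps)
  ultimately show "W (E 2)"
    using in_mult_image_cancel_of_int \<delta> by metis
qed

lemma W_E:
  assumes "t \<le> n"
  shows "W (E t)"
proof -
  consider "t = 0" | "t = 1" | "2 \<le> t" by linarith
  then show ?thesis
  proof cases
    case 3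
    have "W (geo_defect t + of_int ((-9) ^ t) * E 2)"
      using 3 assms by (intro in_mult_image_add in_mult_image_of_int_mult W_E_geometric W_E_1_E_2)
    then have "W (of_int (9 * 3 ^ t) * E t)"
      by (simp add: geo_defect_def)
    then show ?thesis
      by (rule in_mult_image_cancel_of_int) simp
  qed (use W_E_0 W_E_1_E_2 in simp_all)
qed

lemma W_mon_p_V_y_q:
  "u + t + j + k = n \<Longrightarrow> W (p ^ u * V ^ t * y ^ j * q ^ k)"
proof (induction "j + k" arbitrary: u t j k)
  case 0
  then have "u = n - t" "t \<le> n" "j = 0" "k = 0"
    by simp_all
  then show ?case
    using W_E[of t] by (simp add: E_def)
next
  case (Suc s)
  show ?case
  proof (cases j)
    case (Suc j')
    have "p ^ u * V ^ t * y ^ j * q ^ k = p ^ u * V ^ t * y ^ j' * q ^ k * (p + V)"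
      unfolding p_add_V Suc by (simp add: algebra_simps)
    also have "\<dots> = p ^ Suc u * V ^ t * y ^ j' * q ^ k + p ^ u * V ^ Suc t * y ^ j' * q ^ k"
      by (simp add: algebra_simps)
    finally show ?thesis
      using Suc.hyps(1)[of j' k "Suc u" t] Suc.hyps(1)[of j' k u "Suc t"] Suc.hyps(2) Suc.prems
        \<open>j = Suc j'\<close>
      by (simp add: in_mult_image_add)
  next
    case 0
    then obtain k' where k: "k = Suc k'"
      using Suc.hyps(2) by (cases k) auto
    have "p ^ u * V ^ t * y ^ j * q ^ k = p ^ u * V ^ t * y ^ j * q ^ k' * ((p + 3 * V) - L)"
      unfolding q_add_L[symmetric] k by (simp add: algebra_simps)
    also have "\<dots> = p ^ Suc u * V ^ t * y ^ j * q ^ k' + of_int 3 * (p ^ u * V ^ Suc t * y ^ j * q ^ k')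
        - L * (p ^ u * V ^ t * y ^ j * q ^ k')"
      by (simp add: algebra_simps)
    finally show ?thesis
    proof (simp only:, intro in_mult_image_diff in_mult_image_add in_mult_image_of_int_mult W_L_mult)
      show "W (p ^ Suc u * V ^ t * y ^ j * q ^ k')" "W (p ^ u * V ^ Suc t * y ^ j * q ^ k')"
        using Suc.hyps(1)[of j k' "Suc u" t] Suc.hyps(1)[of j k' u "Suc t"] Suc.hyps(2) Suc.prems 0 k
        by simp_all
      have "n - 1 = u + t + j + k'"
        using Suc.prems k by simp
      then show "homog (n - 1) (p ^ u * V ^ t * y ^ j * q ^ k')"
        by (simp only:) (intro homog_mult homog_power homog_p homog_V homog_y homog_q)
    qed
  qed
qed

theorem mult_surjective_cubic:
  assumes "\<And>m. mdeg m = n \<Longrightarrow> \<exists>u j k. u + j + k = n \<and> mon m = p ^ u * y ^ j * q ^ k"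
  shows "mult_surjective gs L (n - 1)"
  unfolding mult_surjective_iff
proof (intro allI impI)
  fix g :: "'a poly3"
  assume "homog (Suc (n - 1)) g"
  then have "homog n g"
    using n_ge_3 by simp
  then show "W g"
  proof (rule in_mult_image_homog)
    fix m assume "mdeg m = n"
    then obtain u j k where "u + j + k = n" "mon m = p ^ u * y ^ j * q ^ k"
      using assms by blast
    then show "W (mon m)"
      using W_mon_p_V_y_q[of u 0 j k] by simp
  qed
qed

end

section \<open>The weak Lefschetz property of R/I\<close>

lemma Igens_degree_cases:
  fixes A B C BE G d :: nat
  assumes "C \<le> A" "2 \<le> C" "0 < BE" "BE < B" "0 < G" "G < B" "G < C" "B < A + G"
    and "2 * B + C \<le> A + 6 \<or> (B + C \<le> A + 2 \<and> BE + B + C \<le> A + 5)"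
    and d: "d = (A + B + C - 3 - BE) div 2"
  shows "(B = 3 \<and> BE = 1 \<and> C = A) \<or> (B + C \<le> d + 2 + BE \<and> B + C \<le> d + 2 + G) \<or>
         (B + C \<le> d + 2 + BE \<and> B + C \<le> d + 2 + 2 * G \<and> A + 2 * G \<le> d + BE + 2 \<and> G < BE)"
proof -
  have low: "N \<le> d + 1" if "2 * N \<le> A + B + C - 1 - BE" for N
    using that d assms(1-4) by linarith
  have s3: "3 + BE \<le> A + B + C"
    using assms by linarith
  show ?thesis
  proof (cases "B = 3 \<and> BE = 1 \<and> C = A")
    case False
    have "B + C \<le> A + 1 + BE"
      using assms False by auto
    then have c1: "B + C \<le> d + 2 + BE"
      using low[of "B + C - 1 - BE"] s3 by linarith
    show ?thesis
    proof (cases "BE \<le> G")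
      case True
      then show ?thesis using c1 by linarith
    next
      case G_less: False
      show ?thesis
      proof (cases "B + C - 1 + BE \<le> A + 2 * G")
        case True
        then have "B + C \<le> d + 2 + G"
          using low[of "B + C - 1 - G"] s3 assms by linarith
        then show ?thesis using c1 by blast
      next
        case False
        then have G: "G = 1"
          using assms G_less by linarith
        have "B + C \<le> d + 2 + 2 * G"
          using low[of "B + C - 3"] G assms G_less s3 by linarith
        moreover have "A + 2 * G \<le> d + BE + 2"
          using low[of "A + 1 - BE"] G False assms s3 by linarith
        ultimately show ?thesis
          using c1 G_less by simp
      qed
    qed
  qed blast
qed

context linked_ideal
begin

lemma mult_surjective_cubic_case:
  assumes "B = 3" "BE = 1" "C = A"
  shows "\<exists>L. homog 1 L \<and> mult_surjective (Igens A B C BE G :: 'k::field_char_0 poly3 list) L (A - 1)"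
proof -
  let ?gs = "Igens A B C BE G :: 'k poly3 list"
  let ?x = "mon (1,0,0) :: 'k poly3" and ?y = "mon (0,1,0) :: 'k poly3"
    and ?z = "mon (0,0,1) :: 'k poly3"
  have A: "3 \<le> A"
    using assms B_less G_less_B G_less_C by linarith
  have "G = 1 \<or> G = 2"
    using assms G_pos G_less_B by linarith
  then show ?thesis
  proof
    assume "G = 1"
    then interpret cubic_family ?gs ?x ?z ?y A
      using assms A Igens_mem
      by unfold_locales (simp_all add: homog_mon mon_power mon_mult numeral_2_eq_2 numeral_3_eq_3)
    have "mult_surjective ?gs L (A - 1)"
    proof (rule mult_surjective_cubic)
      fix m :: "nat \<times> nat \<times> nat" assume "mdeg m = A"
      moreover obtain i j k where "m = (i,j,k)" by (cases m)
      ultimately show "\<exists>u j' k'. u + j' + k' = A \<and> mon m = ?x ^ u * ?y ^ j' * ?z ^ k'"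
        by (intro exI[of _ i] exI[of _ j] exI[of _ k]) (simp add: mon_power mon_mult)
    qed
    then show ?thesis
      using homog_L by blast
  next
    assume "G = 2"
    then interpret cubic_family ?gs ?z ?x ?y A
      using assms A Igens_mem
      by unfold_locales (simp_all add: homog_mon mon_power mon_mult numeral_2_eq_2 numeral_3_eq_3)
    have "mult_surjective ?gs L (A - 1)"
    proof (rule mult_surjective_cubic)
      fix m :: "nat \<times> nat \<times> nat" assume "mdeg m = A"
      moreover obtain i j k where "m = (i,j,k)" by (cases m)
      ultimately show "\<exists>u j' k'. u + j' + k' = A \<and> mon m = ?z ^ u * ?y ^ j' * ?x ^ k'"
        by (intro exI[of _ k] exI[of _ j] exI[of _ i]) (simp add: mon_power mon_mult)
    qed
    then show ?thesis
      using homog_L by blast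
  qed
qed

theorem has_WLP_Igens:
  assumes "C \<le> A" "2 \<le> C"
    and "2 * B + C \<le> A + 6 \<or> (B + C \<le> A + 2 \<and> BE + B + C \<le> A + 5)"
  shows "has_WLP (Igens A B C BE G :: 'k::field_char_0 poly3 list)"
proof -
  define d where "d = (A + B + C - 3 - BE) div 2"
  have "\<exists>L. homog 1 L \<and> mult_surjective (Igens A B C BE G :: 'k poly3 list) L d"
    using Igens_degree_cases[OF assms(1,2) BE_pos BE_less_B G_pos G_less_B G_less_C B_less
        assms(3) d_def]
  proof (elim disjE conjE)
    assume "B = 3" "BE = 1" "C = A"
    moreover have "d = A - 1"
      using \<open>B = 3\<close> \<open>BE = 1\<close> \<open>C = A\<close> d_def assms(2) by simp
    ultimately show ?thesis
      using mult_surjective_cubic_case by simp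
  next
    assume "B + C \<le> d + 2 + BE" "B + C \<le> d + 2 + G"
    then show ?thesis
      using mult_surjective_y_sub_x_walk_down homog_y_sub_x by blast
  next
    assume "B + C \<le> d + 2 + BE" "B + C \<le> d + 2 + 2 * G" "A + 2 * G \<le> d + BE + 2" "G < BE"
    then show ?thesis
      using mult_surjective_y_sub_x_walk_up homog_y_sub_x by blast
  qed
  then obtain L where "homog 1 L" "mult_surjective (Igens A B C BE G :: 'k poly3 list) L d"
    by blast
  then show ?thesis
    by (rule has_WLP_by_duality[OF _ artinian_quot_I socle_duality_I]) (simp add: d_def)
qed

end

theorem corollary3p10:
  fixes a b c \<beta> \<gamma> :: int
  assumes "a \<ge> c" and "c \<ge> 2"
    and "1 \<le> \<beta>" and "\<beta> \<le> b - 1"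
    and "max 1 (b - a + 1) \<le> \<gamma>" and "\<gamma> \<le> min (b - 1) (c - 1)"
    and "a \<ge> 2 * b + c - 6 \<or> (a \<ge> b + c - 2 \<and> 1 \<le> \<beta> \<and> \<beta> \<le> a - b - c + 5)"
  shows "has_WLP ([varX ^ nat a,
                   varY ^ nat b - varX ^ nat (b - \<gamma>) * varZ ^ nat \<gamma>,
                   varZ ^ nat c,
                   varX ^ nat (a - b + \<gamma>) * varY ^ nat (b - \<beta>),
                   varY ^ nat (b - \<beta>) * varZ ^ nat (c - \<gamma>)] :: 'k::field_char_0 poly3 list)"
proof -
  have \<gamma>: "1 \<le> \<gamma>" "b - a + 1 \<le> \<gamma>" "\<gamma> \<le> b - 1" "\<gamma> \<le> c - 1"
    using assms(5,6) by auto
  interpret linked_ideal "nat a" "nat b" "nat c" "nat \<beta>" "nat \<gamma>"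
    using assms(3,4) \<gamma> by unfold_locales linarith+
  have "nat (b - \<gamma>) = nat b - nat \<gamma>" "nat (a - b + \<gamma>) = nat a + nat \<gamma> - nat b"
    "nat (b - \<beta>) = nat b - nat \<beta>" "nat (c - \<gamma>) = nat c - nat \<gamma>"
    using assms \<gamma> by linarith+
  then have "[varX ^ nat a, varY ^ nat b - varX ^ nat (b - \<gamma>) * varZ ^ nat \<gamma>, varZ ^ nat c,
      varX ^ nat (a - b + \<gamma>) * varY ^ nat (b - \<beta>), varY ^ nat (b - \<beta>) * varZ ^ nat (c - \<gamma>)]
      = (Igens (nat a) (nat b) (nat c) (nat \<beta>) (nat \<gamma>) :: 'k poly3 list)"
    by (simp add: Igens_def varX_power varY_power varZ_power mon_mult)
  moreover have "has_WLP (Igens (nat a) (nat b) (nat c) (nat \<beta>) (nat \<gamma>) :: 'k poly3 list)"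
    using assms by (intro has_WLP_Igens) linarith+
  ultimately show ?thesis
    by simp
qed

end
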